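(* Let $G\in\mathfrak D_4$ and let $\Upsilon\subseteq G$ be a subgraph isomorphic to the Mycielski–Grötzsch graph, with vertices labelled $a_j,b_j$ ($j\in\mathbb Z/5\mathbb Z$), $c$ as below. If $i\in\mathbb Z/5\mathbb Z$ and $q\in V(G)$ is adjacent to both $a_{i-1}$ and $a_{i+1}$, then $q$ is adjacent to $a_i$.
   Context: $\mathfrak D_4$ is the class of (finite) maximal triangle-free graphs satisfying property $\mathscr{D}_4$. Maximal triangle-free: no triangle, and adding any new edge creates a triangle. Property $\mathscr{D}_k$: for every $m\in\{1,\dots,k\}$ and every sequence $x_1,\dots,x_{3m}$ of (not necessarily distinct) vertices there is a vertex $y$ with $|\{i\in[3m]: x_iy\in E(G)\}|\ge m+1$. Mycielski–Grötzsch graph: vertices $a_j,b_j$ ($j\in\mathbb Z/5\mathbb Z$) and $c$; its edges are exactly all pairs $a_jc$, $a_jb_{j+2}$, $a_jb_{j-2}$, $b_jb_{j+2}$. *)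

theory Defs
  imports Main "HOL-Library.Numeral_Type"
begin

definition simple_graph :: "'v set \<Rightarrow> ('v \<Rightarrow> 'v \<Rightarrow> bool) \<Rightarrow> bool" where
  "simple_graph V E \<longleftrightarrow> finite V \<and> (\<forall>x y. E x y \<longrightarrow> x \<in> V \<and> y \<in> V)
     \<and> (\<forall>x y. E x y \<longrightarrow> E y x) \<and> (\<forall>x. \<not> E x x)"

definition triangle_free :: "'v set \<Rightarrow> ('v \<Rightarrow> 'v \<Rightarrow> bool) \<Rightarrow> bool" where
  "triangle_free V E \<longleftrightarrow> \<not> (\<exists>x\<in>V. \<exists>y\<in>V. \<exists>z\<in>V. E x y \<and> E y z \<and> E x z)"

definition maximal_triangle_free :: "'v set \<Rightarrow> ('v \<Rightarrow> 'v \<Rightarrow> bool) \<Rightarrow> bool" where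
  "maximal_triangle_free V E \<longleftrightarrow> simple_graph V E \<and> triangle_free V E \<and>
     (\<forall>x\<in>V. \<forall>y\<in>V. x \<noteq> y \<and> \<not> E x y \<longrightarrow> (\<exists>z\<in>V. E x z \<and> E z y))"

definition property_D :: "nat \<Rightarrow> 'v set \<Rightarrow> ('v \<Rightarrow> 'v \<Rightarrow> bool) \<Rightarrow> bool" where
  "property_D k V E \<longleftrightarrow> (\<forall>m \<in> {1..k}. \<forall>x :: nat \<Rightarrow> 'v. (\<forall>i\<in>{1..3*m}. x i \<in> V) \<longrightarrow>
     (\<exists>y\<in>V. card {i \<in> {1..3*m}. E (x i) y} \<ge> m + 1))"

definition in_frak_D4 :: "'v set \<Rightarrow> ('v \<Rightarrow> 'v \<Rightarrow> bool) \<Rightarrow> bool" where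
  "in_frak_D4 V E \<longleftrightarrow> maximal_triangle_free V E \<and> property_D 4 V E"

text \<open>Vertices a, b (indexed by Z/5Z, the type 5) and c of G span a (not necessarily induced) subgraph
  isomorphic to the Mycielski-Groetzsch graph with this labelling: the 11 vertices are distinct
  vertices of G, and all edges a_j c, a_j b_{j+2}, a_j b_{j-2}, b_j b_{j+2} are edges of G.\<close>
definition mycielski_copy :: "'v set \<Rightarrow> ('v \<Rightarrow> 'v \<Rightarrow> bool) \<Rightarrow> (5 \<Rightarrow> 'v) \<Rightarrow> (5 \<Rightarrow> 'v) \<Rightarrow> 'v \<Rightarrow> bool" where
  "mycielski_copy V E a b c \<longleftrightarrow>
     inj a \<and> inj b \<and> range a \<inter> range b = {} \<and> c \<notin> range a \<and> c \<notin> range b \<and>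
     range a \<subseteq> V \<and> range b \<subseteq> V \<and> c \<in> V \<and>
     (\<forall>j. E (a j) c \<and> E (a j) (b (j + 2)) \<and> E (a j) (b (j - 2)) \<and> E (b j) (b (j + 2)))"

end

theory Submission
  imports Defs
begin

text \<open>
  Rotating the labelling reduces to i = 0. Suppose q is adjacent to a1 and a4 but not to a0;
  by maximality q and a0 have a common neighbour z. In a triangle-free graph the neighbours of a
  vertex form an independent set, so property D3 applied to a0, a1, a4, b1, b2, b3, b4, q, z yields
  a vertex y adjacent to z and to a1, b1, b2, or (mirror image under j \<mapsto> -j) to a4, b4, b3.
  Adding y to c, a0, a1, a3, a4, b0, b1, b2, b3, q, z gives twelve vertices spanning a graph of
  independence number 4, which contradicts property D4.
\<close>

lemma of_nat_length_filter:
  "of_nat (length (filter P xs)) = (\<Sum>x\<leftarrow>xs. if P x then 1 else 0)"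
  by (induction xs) simp_all

lemma property_D_list:
  assumes D: "property_D k V E" and m: "m \<in> {1..k}"
    and len: "length xs = 3 * m" and xs: "set xs \<subseteq> V"
  shows "\<exists>y\<in>V. m < length (filter (\<lambda>u. E u y) xs)"
proof -
  define x where "x k = xs ! (k - 1)" for k
  have "\<forall>k\<in>{1..3*m}. x k \<in> V"
    using len xs by (auto simp: x_def intro!: subsetD[OF xs] nth_mem)
  then obtain y where "y \<in> V" and y: "m + 1 \<le> card {k \<in> {1..3*m}. E (x k) y}"
    using D m unfolding property_D_def by blast
  have "{k \<in> {1..3*m}. E (x k) y} = Suc ` {i. i < length xs \<and> E (xs ! i) y}"
    using len by (auto simp: x_def image_iff gr0_conv_Suc Suc_le_eq)
  then have "card {k \<in> {1..3*m}. E (x k) y} = length (filter (\<lambda>u. E u y) xs)"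
    by (simp add: card_image length_filter_conv_card)
  with \<open>y \<in> V\<close> y show ?thesis by force
qed

lemma not_property_D_if_neighbours_bounded:
  assumes "m \<in> {1..k}" "length xs = 3 * m" "set xs \<subseteq> V"
    and "\<And>y. length (filter (\<lambda>u. E u y) xs) \<le> m"
  shows "\<not> property_D k V E"
  using property_D_list[OF _ assms(1-3)] assms(4) by (meson not_le)

lemma uminus_5: "- 0 = (0::5)" "- 1 = (4::5)" "- 2 = (3::5)" "- 3 = (2::5)" "- 4 = (1::5)"
  by simp_all

lemma mycielski_copy_reindex:
  assumes copy: "mycielski_copy V E a b c" and "symp E"
    and "bij \<sigma>" and step: "\<And>j. \<sigma> (j + 2) = \<sigma> j + 2 \<or> \<sigma> (j + 2) = \<sigma> j - 2"
  shows "mycielski_copy V E (a \<circ> \<sigma>) (b \<circ> \<sigma>) c"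
proof -
  have range_comp: "range (f \<circ> \<sigma>) = range f" for f :: "5 \<Rightarrow> 'v"
    using \<open>bij \<sigma>\<close> by (metis bij_is_surj image_comp)
  have ab: "E (a k) (b (k + 2))" "E (a k) (b (k - 2))" and bb: "E (b k) (b (k + 2))" for k
    using copy unfolding mycielski_copy_def by auto
  have "E (a (\<sigma> j)) (b (\<sigma> (j + 2)))" for j
    using step[of j] ab[of "\<sigma> j"] by auto
  moreover have "E (a (\<sigma> j)) (b (\<sigma> (j - 2)))" for j
    using step[of "j - 2"] ab[of "\<sigma> j"] by auto
  moreover have "E (b (\<sigma> j)) (b (\<sigma> (j + 2)))" for j
    using step[of j] bb[of "\<sigma> j"] sympD[OF \<open>symp E\<close> bb[of "\<sigma> j - 2"]] by auto
  moreover have "inj (a \<circ> \<sigma>)" "inj (b \<circ> \<sigma>)"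
    using copy \<open>bij \<sigma>\<close> unfolding mycielski_copy_def by (auto intro: inj_compose bij_is_inj)
  ultimately show ?thesis
    using copy unfolding mycielski_copy_def range_comp by simp
qed

locale triangle_free_graph =
  fixes V :: "'v set" and E :: "'v \<Rightarrow> 'v \<Rightarrow> bool"
  assumes simple: "simple_graph V E" and triangle_free: "triangle_free V E"
begin

lemma symp_edges: "symp E"
  using simple unfolding simple_graph_def by (blast intro: sympI)

lemma no_common_neighbour:
  assumes "E u v" shows "\<not> (E u w \<and> E v w)"
proof
  assume "E u w \<and> E v w"
  moreover have "u \<in> V" "v \<in> V" "w \<in> V"
    using assms \<open>E u w \<and> E v w\<close> simple unfolding simple_graph_def by blast+
  ultimately show False
    using assms triangle_free unfolding triangle_free_def by blast
qed

end

locale mycielski_in_triangle_free = triangle_free_graph V E for V :: "'v set" and E +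
  fixes a b :: "5 \<Rightarrow> 'v" and c :: 'v
  assumes copy: "mycielski_copy V E a b c"
begin

lemma mycielski_vertices: "a j \<in> V" "b j \<in> V" "c \<in> V"
  using copy unfolding mycielski_copy_def by auto

lemma mycielski_edges:
  "E (a 0) c" "E (a 1) c" "E (a 2) c" "E (a 3) c" "E (a 4) c"
  "E (a 0) (b 2)" "E (a 0) (b 3)" "E (a 1) (b 3)" "E (a 1) (b 4)" "E (a 2) (b 4)"
  "E (a 2) (b 0)" "E (a 3) (b 0)" "E (a 3) (b 1)" "E (a 4) (b 1)" "E (a 4) (b 2)"
  "E (b 0) (b 2)" "E (b 1) (b 3)" "E (b 2) (b 4)" "E (b 3) (b 0)" "E (b 4) (b 1)"
proof -
  have [simp]: "(5::5) = 0" "(6::5) = 1"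
    by simp_all
  have "E (a j) c \<and> E (a j) (b (j + 2)) \<and> E (a j) (b (j - 2)) \<and> E (b j) (b (j + 2))" for j
    using copy unfolding mycielski_copy_def by auto
  from this[of 0] this[of 1] this[of 2] this[of 3] this[of 4] show
    "E (a 0) c" "E (a 1) c" "E (a 2) c" "E (a 3) c" "E (a 4) c"
    "E (a 0) (b 2)" "E (a 0) (b 3)" "E (a 1) (b 3)" "E (a 1) (b 4)" "E (a 2) (b 4)"
    "E (a 2) (b 0)" "E (a 3) (b 0)" "E (a 3) (b 1)" "E (a 4) (b 1)" "E (a 4) (b 2)"
    "E (b 0) (b 2)" "E (b 1) (b 3)" "E (b 2) (b 4)" "E (b 3) (b 0)" "E (b 4) (b 1)"
    by (simp_all add: uminus_5)
qed

lemma mycielski_reflected: "mycielski_in_triangle_free V E (\<lambda>j. a (- j)) (\<lambda>j. b (- j)) c"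
proof -
  have "mycielski_copy V E (a \<circ> uminus) (b \<circ> uminus) c"
    by (rule mycielski_copy_reindex[OF copy symp_edges bij_uminus]) (rule disjI2, simp)
  then show ?thesis
    by unfold_locales (simp_all add: comp_def simple triangle_free)
qed

lemma neighbours_among_nine:
  assumes "E q (a 1)" "E q (a 4)" "E q z" "E z (a 0)"
    and "3 < length (filter (\<lambda>u. E u y) [a 0, a 1, a 4, b 1, b 2, b 3, b 4, q, z])"
  shows "(E (a 1) y \<and> E (b 1) y \<and> E (b 2) y \<and> E z y) \<or>
         (E (a 4) y \<and> E (b 3) y \<and> E (b 4) y \<and> E z y)"
proof -
  have "3 < int (length (filter (\<lambda>u. E u y) [a 0, a 1, a 4, b 1, b 2, b 3, b 4, q, z]))"
    using assms(5) by simp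
  then show ?thesis
    unfolding of_nat_length_filter list.map sum_list_simps
    using assms(1-4)[THEN no_common_neighbour, where w = y]
      mycielski_edges[THEN no_common_neighbour, where w = y]
    by smt
qed

lemma neighbours_among_twelve:
  assumes "E q (a 1)" "E q (a 4)" "E q z" "E z (a 0)"
    and "E (a 1) y" "E (b 1) y" "E (b 2) y" "E z y"
  shows "length (filter (\<lambda>u. E u w) [c, a 0, a 1, a 3, a 4, b 0, b 1, b 2, b 3, q, z, y]) \<le> 4"
proof -
  have "int (length (filter (\<lambda>u. E u w) [c, a 0, a 1, a 3, a 4, b 0, b 1, b 2, b 3, q, z, y])) \<le> 4"
    unfolding of_nat_length_filter list.map sum_list_simps
    using assms[THEN no_common_neighbour, where w = w]
      mycielski_edges[THEN no_common_neighbour, where w = w]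
    by smt
  then show ?thesis by simp
qed

lemma not_property_D4_if_common_neighbour_with_a0:
  assumes q: "q \<in> V" "E q (a 1)" "E q (a 4)" and z: "z \<in> V" "E q z" "E z (a 0)"
  shows "\<not> property_D 4 V E"
proof
  assume D: "property_D 4 V E"
  have "\<exists>y\<in>V. 3 < length (filter (\<lambda>u. E u y) [a 0, a 1, a 4, b 1, b 2, b 3, b 4, q, z])"
    by (rule property_D_list[OF D]) (use q z mycielski_vertices in auto)
  then obtain y where "y \<in> V"
    and y: "3 < length (filter (\<lambda>u. E u y) [a 0, a 1, a 4, b 1, b 2, b 3, b 4, q, z])"
    by blast
  from neighbours_among_nine[OF q(2,3) z(2,3) y] have "\<not> property_D 4 V E"
  proof (elim disjE conjE)
    assume y_nbrs: "E (a 1) y" "E (b 1) y" "E (b 2) y" "E z y"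
    show ?thesis
      by (rule not_property_D_if_neighbours_bounded
          [OF _ _ _ neighbours_among_twelve[OF q(2,3) z(2,3) y_nbrs]])
        (use q z \<open>y \<in> V\<close> mycielski_vertices in auto)
  next
    assume y_nbrs: "E (a 4) y" "E (b 3) y" "E (b 4) y" "E z y"
    \<comment> \<open>the reflection \<open>j \<mapsto> -j\<close> swaps this case with the previous one\<close>
    interpret reflected: mycielski_in_triangle_free V E "\<lambda>j. a (- j)" "\<lambda>j. b (- j)" c
      by (rule mycielski_reflected)
    note bound = reflected.neighbours_among_twelve[unfolded uminus_5]
    show ?thesis
      by (rule not_property_D_if_neighbours_bounded
          [OF _ _ _ bound[OF q(3,2) z(2,3) y_nbrs(1,3,2,4)]])
        (use q z \<open>y \<in> V\<close> mycielski_vertices in auto)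
  qed
  with D show False by contradiction
qed

lemma adjacent_a0_if_adjacent_a1_a4:
  assumes "maximal_triangle_free V E" "property_D 4 V E"
    and q: "q \<in> V" "E q (a 1)" "E q (a 4)"
  shows "E q (a 0)"
proof (rule ccontr)
  assume "\<not> E q (a 0)"
  moreover have "q \<noteq> a 0"
    using no_common_neighbour[OF q(3), of c] mycielski_edges(1,5) by auto
  ultimately obtain z where "z \<in> V" "E q z" "E z (a 0)"
    using assms(1) q(1) mycielski_vertices(1) unfolding maximal_triangle_free_def by blast
  with assms(2) q show False
    using not_property_D4_if_common_neighbour_with_a0 by blast
qed

end

theorem mainTheorem13:
  fixes V :: "'v set" and E :: "'v \<Rightarrow> 'v \<Rightarrow> bool"
    and a b :: "5 \<Rightarrow> 'v" and c q :: 'v and i :: 5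
  assumes "in_frak_D4 V E"
    and "mycielski_copy V E a b c"
    and "q \<in> V"
    and "E q (a (i - 1))" and "E q (a (i + 1))"
  shows "E q (a i)"
proof -
  have mtf: "maximal_triangle_free V E" and D: "property_D 4 V E"
    using assms(1) unfolding in_frak_D4_def by auto
  then interpret triangle_free_graph V E
    by unfold_locales (simp_all add: maximal_triangle_free_def)
  have "mycielski_copy V E (a \<circ> (+) i) (b \<circ> (+) i) c"
    by (rule mycielski_copy_reindex[OF assms(2) symp_edges bij_plus]) (simp add: add.assoc)
  then interpret rotated: mycielski_in_triangle_free V E "\<lambda>j. a (i + j)" "\<lambda>j. b (i + j)" c
    by unfold_locales (simp add: comp_def)
  have "i + 4 = i - 1"
    by simp
  show ?thesis
    using rotated.adjacent_a0_if_adjacent_a1_a4[OF mtf D, unfolded add_0_right \<open>i + 4 = i - 1\<close>]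
      assms(3-5)
    by blast
qed

end
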